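(* Let $\widetilde\nabla$ be the canonical snm-connection on $\mathbb R^3$ determined by $\mathsf C=\partial_z$, and let $M$ be the rotational surface $\psi(s,t)=(x(s)\cos t,x(s)\sin t,z(s))$, $s\in I$, $t\in\mathbb R$, with $I$ an open interval, $x>0$, $x'^2+z'^2=1$, whose generating curve $s\mapsto(x(s),z(s))$ is a segment of a straight line. If the sectional curvature $K$ of $M$ with respect to $\widetilde\nabla$ is constant, then either $x$ is constant (so $M$ is part of a circular cylinder about the $z$-axis) and $K=\tfrac12$, or $z$ is constant (so $M$ is part of a horizontal plane) and $K=0$.
   Context: Let $\langle\cdot,\cdot\rangle$ be the Euclidean metric on $\mathbb R^3$ and $\widetilde\nabla^0$ its Levi-Civita connection (the ordinary directional derivative). Given a smooth vector field $\mathsf C$ on $\mathbb R^3$, the semi-symmetric non-metric connection (snm-connection) determined by $\mathsf C$ is $\widetilde\nabla_XY=\widetilde\nabla^0_XY+\langle \mathsf C,Y\rangle X$. Its curvature tensor is $\widetilde R(X,Y)Z=\widetilde\nabla_X\widetilde\nabla_YZ-\widetilde\nabla_Y\widetilde\nabla_XZ-\widetilde\nabla_{[X,Y]}Z$. For a surface $M$ immersed in $\mathbb R^3$, the induced connection is $\nabla_XY=(\widetilde\nabla_XY)^{\top}$ (tangential component), with curvature tensor $R$ defined by the same formula, and the sectional curvature of $M$ with respect to $\widetilde\nabla$ at $p$ is $K(p)=\frac12\big(\langle R(e_1,e_2)e_2,e_1\rangle+\langle R(e_2,e_1)e_1,e_2\rangle\big)$ for an orthonormal basis $\{e_1,e_2\}$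 of $T_pM$. *)

theory Defs
  imports "HOL-Analysis.Analysis"
begin

type_synonym param = "real \<times> real"
type_synonym vec3 = "real^3"

definition smooth_real_on :: "real set \<Rightarrow> (real \<Rightarrow> real) \<Rightarrow> bool" where
  "smooth_real_on I f \<longleftrightarrow> (\<exists>D :: nat \<Rightarrow> real \<Rightarrow> real. D 0 = f \<and>
      (\<forall>n. \<forall>s\<in>I. (D n has_real_derivative D (Suc n) s) (at s)))"

text \<open>For a field W along
  psi this is the Euclidean (Levi-Civita) derivative of W in direction d psi(a).\<close>
definition pdir :: "(param \<Rightarrow> 'a::real_normed_vector) \<Rightarrow> param \<Rightarrow> param \<Rightarrow> 'a" where
  "pdir W u a = vector_derivative (\<lambda>h. W (u + h *\<^sub>R a)) (at 0)"

definition tangent_space :: "(param \<Rightarrow> vec3) \<Rightarrow> param \<Rightarrow> vec3 set" where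
  "tangent_space \<psi> u = span {pdir \<psi> u (1,0), pdir \<psi> u (0,1)}"

definition tang :: "(param \<Rightarrow> vec3) \<Rightarrow> param \<Rightarrow> vec3 \<Rightarrow> vec3" where
  "tang \<psi> u V = (THE w. w \<in> tangent_space \<psi> u \<and>
                        (\<forall>v\<in>tangent_space \<psi> u. (V - w) \<bullet> v = 0))"

text \<open>The snm-connection determined by C applied to a field Y along psi, in
  direction X = d psi(a):  nabla~_X Y = nabla~0_X Y + <C,Y> X.\<close>
definition snm_conn :: "(vec3 \<Rightarrow> vec3) \<Rightarrow> (param \<Rightarrow> vec3) \<Rightarrow> param \<Rightarrow> (param \<Rightarrow> vec3) \<Rightarrow> param \<Rightarrow> vec3" where
  "snm_conn C \<psi> a Y u = pdir Y u a + (C (\<psi> u) \<bullet> Y u) *\<^sub>R pdir \<psi> u a"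

definition ind_conn :: "(vec3 \<Rightarrow> vec3) \<Rightarrow> (param \<Rightarrow> vec3) \<Rightarrow> param \<Rightarrow> (param \<Rightarrow> vec3) \<Rightarrow> param \<Rightarrow> vec3" where
  "ind_conn C \<psi> a Y u = tang \<psi> u (snm_conn C \<psi> a Y u)"

text \<open>Curvature R(X,Y)Z of the induced connection at psi(u), for X = d psi(a),
  Y = d psi(b), Z = d psi(c), computed with the coordinate-constant extensions
  of X, Y, Z (whose Lie bracket [X,Y] vanishes, so the term nabla_[X,Y] Z is 0).\<close>
definition ind_curv :: "(vec3 \<Rightarrow> vec3) \<Rightarrow> (param \<Rightarrow> vec3) \<Rightarrow> param \<Rightarrow> param \<Rightarrow> param \<Rightarrow> param \<Rightarrow> vec3" where
  "ind_curv C \<psi> a b c u =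
     (let Z = (\<lambda>v. pdir \<psi> v c) in
      ind_conn C \<psi> a (ind_conn C \<psi> b Z) u - ind_conn C \<psi> b (ind_conn C \<psi> a Z) u)"

definition sect_expr :: "(vec3 \<Rightarrow> vec3) \<Rightarrow> (param \<Rightarrow> vec3) \<Rightarrow> param \<Rightarrow> param \<Rightarrow> param \<Rightarrow> real" where
  "sect_expr C \<psi> u a b =
     (1/2) * (ind_curv C \<psi> a b b u \<bullet> pdir \<psi> u a + ind_curv C \<psi> b a a u \<bullet> pdir \<psi> u b)"

definition const_sect_curv :: "(vec3 \<Rightarrow> vec3) \<Rightarrow> (param \<Rightarrow> vec3) \<Rightarrow> param set \<Rightarrow> real \<Rightarrow> bool" where
  "const_sect_curv C \<psi> U k \<longleftrightarrow>
     (\<forall>u\<in>U. \<forall>a b. norm (pdir \<psi> u a) = 1 \<and> norm (pdir \<psi> u b) = 1 \<and>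
                   pdir \<psi> u a \<bullet> pdir \<psi> u b = 0 \<longrightarrow> sect_expr C \<psi> u a b = k)"

definition rot_surf :: "(real \<Rightarrow> real) \<Rightarrow> (real \<Rightarrow> real) \<Rightarrow> param \<Rightarrow> vec3" where
  "rot_surf x z = (\<lambda>(s,t). vector [x s * cos t, x s * sin t, z s])"

definition Cz :: "vec3 \<Rightarrow> vec3" where
  "Cz = (\<lambda>_. vector [0, 0, 1])"

end

theory Submission
  imports Defs
begin

(*
  Since A x + B z is constant and x'\<^sup>2 + z'\<^sup>2 = 1, the velocity (x', z') is one of the two
  unit vectors orthogonal to (A, B); being continuous on an interval it is a constant (p, q).
  For such a surface, in the frame \<psi>\<^sub>s = p radial + q e\<^sub>3, \<psi>\<^sub>t = x circular, the induced
  connection maps rotationally symmetric tangent fields to fields of the same kind with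
  explicitly computable coefficients.  Evaluating the curvature on e\<^sub>1 = \<psi>\<^sub>s, e\<^sub>2 = \<psi>\<^sub>t / x
  gives K = (q\<^sup>2 - p q / x) / 2.  As x' = p, this is constant only if p = 0 (a cylinder,
  q\<^sup>2 = 1, K = 1/2) or q = 0 (a horizontal plane, K = 0).
*)

lemma vector3_add [simp]:
  "(vector [a1, a2, a3] :: vec3) + vector [b1, b2, b3] = vector [a1 + b1, a2 + b2, a3 + b3]"
  by (simp add: vec_eq_iff forall_3)

lemma vector3_scaleR [simp]: "c *\<^sub>R (vector [a1, a2, a3] :: vec3) = vector [c * a1, c * a2, c * a3]"
  by (simp add: vec_eq_iff forall_3)

lemma vector3_uminus [simp]: "- (vector [a1, a2, a3] :: vec3) = vector [- a1, - a2, - a3]"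
  by (simp add: vec_eq_iff forall_3)

lemma vector3_inner [simp]:
  "(vector [a1, a2, a3] :: vec3) \<bullet> vector [b1, b2, b3] = a1 * b1 + a2 * b2 + a3 * b3"
  by (simp add: inner_vec_def sum_3)

lemma vector3_has_vector_derivative:
  assumes "(f1 has_real_derivative d1) (at t)" "(f2 has_real_derivative d2) (at t)"
    and "(f3 has_real_derivative d3) (at t)"
  shows "((\<lambda>t. vector [f1 t, f2 t, f3 t] :: vec3) has_vector_derivative vector [d1, d2, d3]) (at t)"
proof -
  have "(\<lambda>t. vector [f1 t, f2 t, f3 t] :: vec3) =
      (\<lambda>t. f1 t *\<^sub>R vector [1, 0, 0] + f2 t *\<^sub>R vector [0, 1, 0] + f3 t *\<^sub>R vector [0, 0, 1])"
    by simp
  moreover have "((\<lambda>t. f1 t *\<^sub>R (vector [1, 0, 0] :: vec3) + f2 t *\<^sub>R vector [0, 1, 0]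
        + f3 t *\<^sub>R vector [0, 0, 1]) has_vector_derivative
      d1 *\<^sub>R vector [1, 0, 0] + d2 *\<^sub>R vector [0, 1, 0] + d3 *\<^sub>R vector [0, 0, 1]) (at t)"
    using assms by (intro derivative_eq_intros) auto
  ultimately show ?thesis by simp
qed

lemma pdir_fst_eqI:
  assumes "open I" "s \<in> I" "\<And>r. r \<in> I \<Longrightarrow> W (r, t) = w r"
    and "(w has_vector_derivative V) (at s)"
  shows "pdir W (s, t) (1, 0) = V"
proof -
  have "(w \<circ> (\<lambda>h. s + h) has_vector_derivative 1 *\<^sub>R V) (at 0)"
    by (rule vector_diff_chain_at) (auto intro!: derivative_eq_intros assms(4))
  then have "((\<lambda>h. w (s + h)) has_vector_derivative V) (at 0)"
    by (simp add: o_def)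
  then have "((\<lambda>h. W ((s, t) + h *\<^sub>R (1, 0))) has_vector_derivative V) (at 0)"
  proof (rule has_vector_derivative_transform_within_open)
    show "open ((\<lambda>h. s + h) -` I)"
      using assms(1) by (intro open_vimage continuous_intros)
  qed (use assms(2,3) in auto)
  then show ?thesis
    unfolding pdir_def by (rule vector_derivative_at)
qed

lemma pdir_snd_eqI:
  assumes "\<And>r. W (s, r) = w r" and "(w has_vector_derivative V) (at t)"
  shows "pdir W (s, t) (0, l) = l *\<^sub>R V"
proof -
  have "(w \<circ> (\<lambda>h. t + h * l) has_vector_derivative l *\<^sub>R V) (at 0)"
    by (rule vector_diff_chain_at) (auto intro!: derivative_eq_intros assms(2))
  then have "((\<lambda>h. W ((s, t) + h *\<^sub>R (0, l))) has_vector_derivative l *\<^sub>R V) (at 0)"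
    by (simp add: o_def assms(1) mult.commute)
  then show ?thesis
    unfolding pdir_def by (rule vector_derivative_at)
qed

lemma tang_orthogonal_basis:
  assumes span: "tangent_space \<psi> u = span {P1, P2}"
    and orth: "P1 \<bullet> P2 = 0" and nz: "P1 \<noteq> 0" "P2 \<noteq> 0"
  shows "tang \<psi> u V = (V \<bullet> P1 / (P1 \<bullet> P1)) *\<^sub>R P1 + (V \<bullet> P2 / (P2 \<bullet> P2)) *\<^sub>R P2"
proof -
  define w where "w = (V \<bullet> P1 / (P1 \<bullet> P1)) *\<^sub>R P1 + (V \<bullet> P2 / (P2 \<bullet> P2)) *\<^sub>R P2"
  have w_span: "w \<in> span {P1, P2}"
    unfolding w_def by (intro span_add span_mul span_base) auto
  have orth': "P2 \<bullet> P1 = 0"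
    using orth by (simp add: inner_commute)
  have "orthogonal (V - w) P1" "orthogonal (V - w) P2"
    using orth orth' nz by (simp_all add: orthogonal_def w_def inner_diff_left inner_add_left)
  then have perp: "(V - w) \<bullet> v = 0" if "v \<in> span {P1, P2}" for v
    using orthogonal_to_span[OF that, of "V - w"] unfolding orthogonal_def by blast
  have "w' = w" if w': "w' \<in> span {P1, P2}" "\<forall>v\<in>span {P1, P2}. (V - w') \<bullet> v = 0" for w'
  proof -
    have "w' - w \<in> span {P1, P2}"
      using w'(1) w_span by (rule span_diff)
    then have "(V - w) \<bullet> (w' - w) - (V - w') \<bullet> (w' - w) = 0"
      using w'(2) perp by simp
    then have "(w' - w) \<bullet> (w' - w) = 0"
      by (simp add: inner_diff_left algebra_simps)
    then show ?thesis by simp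
  qed
  then show ?thesis
    unfolding tang_def span w_def[symmetric] using w_span perp by (intro the_equality) blast+
qed

lemma smooth_real_on_derivative_continuous:
  assumes "smooth_real_on I f" and "\<forall>s\<in>I. (f has_real_derivative f' s) (at s)"
  shows "continuous_on I f'"
proof -
  obtain D where D0: "D 0 = f" and DD: "\<forall>n. \<forall>s\<in>I. (D n has_real_derivative D (Suc n) s) (at s)"
    using assms(1) unfolding smooth_real_on_def by blast
  have "continuous_on I (D 1)"
    using DD DERIV_isCont by (metis One_nat_def continuous_at_imp_continuous_on)
  moreover have "D 1 s = f' s" if "s \<in> I" for s
    using DD D0 assms(2) that DERIV_unique by (metis One_nat_def)
  ultimately show ?thesis by (rule continuous_on_eq)
qed

lemma continuous_on_constant_abs_imp_constant:
  fixes f :: "real \<Rightarrow> real"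
  assumes "connected S" "continuous_on S f" "\<And>s. s \<in> S \<Longrightarrow> \<bar>f s\<bar> = c" "c > 0"
  shows "f constant_on S"
proof (rule continuous_discrete_range_constant[OF assms(1,2)])
  fix s assume "s \<in> S"
  then have "c \<le> norm (f y - f s)" if "y \<in> S" "f y \<noteq> f s" for y
    using assms(3)[of y] assms(3)[of s] that by (auto simp: abs_if split: if_splits)
  then show "\<exists>e>0. \<forall>y. y \<in> S \<and> f y \<noteq> f s \<longrightarrow> e \<le> norm (f y - f s)"
    using assms(4) by blast
qed

lemma zero_derivative_imp_constant_on_interval:
  assumes "is_interval I" and "\<And>s. s \<in> I \<Longrightarrow> (f has_real_derivative 0) (at s)"
  shows "\<exists>c. \<forall>s\<in>I. f s = c"
  using assms by (intro has_field_derivative_zero_constant)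
    (auto simp: is_interval_convex has_field_derivative_at_within)

lemma unit_speed_line_constant_velocity:
  fixes x z x' z' :: "real \<Rightarrow> real"
  assumes I: "open I" "is_interval I"
    and cont: "continuous_on I x'" "continuous_on I z'"
    and dx: "\<And>s. s \<in> I \<Longrightarrow> (x has_real_derivative x' s) (at s)"
    and dz: "\<And>s. s \<in> I \<Longrightarrow> (z has_real_derivative z' s) (at s)"
    and unit: "\<And>s. s \<in> I \<Longrightarrow> (x' s)\<^sup>2 + (z' s)\<^sup>2 = 1"
    and AB: "(A, B) \<noteq> (0, 0)" and line: "\<And>s. s \<in> I \<Longrightarrow> A * x s + B * z s = c"
  shows "\<exists>p q. \<forall>s\<in>I. x' s = p \<and> z' s = q"
proof -
  have normal: "A * x' s + B * z' s = 0" if "s \<in> I" for s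
  proof (rule DERIV_unique)
    show "((\<lambda>s. A * x s + B * z s) has_real_derivative A * x' s + B * z' s) (at s)"
      using dx dz that by (auto intro!: derivative_eq_intros)
    show "((\<lambda>s. A * x s + B * z s) has_real_derivative 0) (at s)"
      using line by (intro has_field_derivative_transform_within_open[OF DERIV_const I(1) that]) auto
  qed
  define n where "n = sqrt (A\<^sup>2 + B\<^sup>2)"
  have n_pos: "n > 0"
    using AB by (auto simp: n_def sum_power2_gt_zero_iff)
  define h where "h s = B * x' s - A * z' s" for s
  have "\<bar>h s\<bar> = n" if "s \<in> I" for s
  proof -
    have "(h s)\<^sup>2 + (A * x' s + B * z' s)\<^sup>2 = (A\<^sup>2 + B\<^sup>2) * ((x' s)\<^sup>2 + (z' s)\<^sup>2)"
      unfolding h_def by algebra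
    then show ?thesis
      using normal[OF that] unit[OF that] by (simp add: n_def real_sqrt_abs[symmetric])
  qed
  moreover have "continuous_on I h"
    unfolding h_def by (intro continuous_intros cont)
  ultimately have "h constant_on I"
    using n_pos is_interval_connected[OF I(2)] by (intro continuous_on_constant_abs_imp_constant)
  then obtain h0 where h0: "\<And>s. s \<in> I \<Longrightarrow> h s = h0"
    unfolding constant_on_def by blast
  have "n\<^sup>2 * x' s = B * h0 \<and> n\<^sup>2 * z' s = - A * h0" if "s \<in> I" for s
  proof -
    have "n\<^sup>2 * x' s = A * (A * x' s + B * z' s) + B * h s"
      "n\<^sup>2 * z' s = B * (A * x' s + B * z' s) - A * h s"
      unfolding h_def n_def by (simp_all add: algebra_simps power2_eq_square)
    then show ?thesis
      using normal[OF that] h0[OF that] by simp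
  qed
  then have "\<forall>s\<in>I. x' s = B * h0 / n\<^sup>2 \<and> z' s = - A * h0 / n\<^sup>2"
    using n_pos by (auto simp: field_simps)
  then show ?thesis by blast
qed

definition radial :: "real \<Rightarrow> vec3" where
  "radial t = vector [cos t, sin t, 0]"

definition circular :: "real \<Rightarrow> vec3" where
  "circular t = vector [- sin t, cos t, 0]"

definition e3 :: vec3 where
  "e3 = vector [0, 0, 1]"

lemma rot_surf_eq: "rot_surf x z (s, t) = x s *\<^sub>R radial t + z s *\<^sub>R e3"
  by (simp add: rot_surf_def radial_def e3_def)

lemma Cz_eq_e3: "Cz v = e3"
  by (simp add: Cz_def e3_def)

lemma radial_has_vector_derivative: "(radial has_vector_derivative circular t) (at t)"
  unfolding radial_def circular_def
  by (intro vector3_has_vector_derivative derivative_eq_intros) auto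

lemma circular_has_vector_derivative: "(circular has_vector_derivative - radial t) (at t)"
  unfolding radial_def circular_def vector3_uminus
  by (intro vector3_has_vector_derivative derivative_eq_intros) auto

lemma inner_radial_circular_e3 [simp]:
  "radial t \<bullet> radial t = 1" "circular t \<bullet> circular t = 1" "e3 \<bullet> e3 = 1"
  "radial t \<bullet> circular t = 0" "circular t \<bullet> radial t = 0"
  "radial t \<bullet> e3 = 0" "e3 \<bullet> radial t = 0" "circular t \<bullet> e3 = 0" "e3 \<bullet> circular t = 0"
  by (simp_all add: radial_def circular_def e3_def power2_eq_square[symmetric])

locale straight_rotational_surface =
  fixes I :: "real set" and x z :: "real \<Rightarrow> real" and p q :: real
  assumes open_I: "open I"
    and x_deriv: "\<And>s. s \<in> I \<Longrightarrow> (x has_real_derivative p) (at s)"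
    and z_deriv: "\<And>s. s \<in> I \<Longrightarrow> (z has_real_derivative q) (at s)"
    and x_pos: "\<And>s. s \<in> I \<Longrightarrow> x s > 0"
    and unit_speed: "p\<^sup>2 + q\<^sup>2 = 1"
begin

lemma x_nonzero [simp]: "s \<in> I \<Longrightarrow> x s \<noteq> 0"
  using x_pos by force

abbreviation \<psi> :: "param \<Rightarrow> vec3" where
  "\<psi> \<equiv> rot_surf x z"

definition psi_s :: "real \<Rightarrow> vec3" where
  "psi_s t = p *\<^sub>R radial t + q *\<^sub>R e3"

definition psi_t :: "real \<Rightarrow> real \<Rightarrow> vec3" where
  "psi_t s t = x s *\<^sub>R circular t"

lemma pdir_psi_fst: "s \<in> I \<Longrightarrow> pdir \<psi> (s, t) (1, 0) = psi_s t"
  unfolding psi_s_def rot_surf_eq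
  by (rule pdir_fst_eqI[OF open_I, where w = "\<lambda>r. x r *\<^sub>R radial t + z r *\<^sub>R e3"])
    (auto intro!: derivative_eq_intros x_deriv z_deriv simp: rot_surf_eq)

lemma pdir_psi_snd: "pdir \<psi> (s, t) (0, l) = l *\<^sub>R psi_t s t"
  unfolding psi_t_def
  by (rule pdir_snd_eqI[where w = "\<lambda>r. x s *\<^sub>R radial r + z s *\<^sub>R e3"])
    (auto intro!: derivative_eq_intros radial_has_vector_derivative simp: rot_surf_eq)

lemma inner_psi [simp]:
  "psi_s t \<bullet> psi_s t = 1" "psi_t s t \<bullet> psi_t s t = (x s)\<^sup>2"
  "psi_s t \<bullet> psi_t s t = 0" "psi_t s t \<bullet> psi_s t = 0"
  "radial t \<bullet> psi_s t = p" "radial t \<bullet> psi_t s t = 0"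
  "circular t \<bullet> psi_s t = 0" "circular t \<bullet> psi_t s t = x s"
  "e3 \<bullet> psi_s t = q" "e3 \<bullet> psi_t s t = 0"
  using unit_speed
  by (simp_all add: psi_s_def psi_t_def inner_add_left inner_add_right power2_eq_square)

lemma tang_psi:
  assumes "s \<in> I"
  shows "tang \<psi> (s, t) V = (V \<bullet> psi_s t) *\<^sub>R psi_s t + (V \<bullet> psi_t s t / (x s)\<^sup>2) *\<^sub>R psi_t s t"
proof -
  have "psi_s t \<noteq> 0" "psi_t s t \<noteq> 0"
    using inner_psi(1)[of t] inner_psi(2)[of s t] assms by (auto simp del: inner_psi)
  moreover have "tangent_space \<psi> (s, t) = span {psi_s t, psi_t s t}"
    using pdir_psi_snd[of s t 1] by (simp add: tangent_space_def pdir_psi_fst[OF assms])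
  ultimately show ?thesis
    by (simp add: tang_orthogonal_basis)
qed

definition frame_field :: "(real \<Rightarrow> real) \<Rightarrow> (real \<Rightarrow> real) \<Rightarrow> (param \<Rightarrow> vec3) \<Rightarrow> bool" where
  "frame_field \<alpha> \<beta> Y \<longleftrightarrow> (\<forall>s\<in>I. \<forall>t. Y (s, t) = \<alpha> s *\<^sub>R psi_s t + \<beta> s *\<^sub>R psi_t s t)"

lemma frame_field_cong:
  assumes "frame_field \<alpha> \<beta> Y" and "\<And>s. s \<in> I \<Longrightarrow> \<alpha> s = \<alpha>2 s \<and> \<beta> s = \<beta>2 s"
  shows "frame_field \<alpha>2 \<beta>2 Y"
  using assms by (simp add: frame_field_def)

lemma frame_field_pdir_psi:
  "frame_field (\<lambda>_. 1) (\<lambda>_. 0) (\<lambda>v. pdir \<psi> v (1, 0))"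
  "frame_field (\<lambda>_. 0) (\<lambda>_. l) (\<lambda>v. pdir \<psi> v (0, l))"
  by (simp_all add: frame_field_def pdir_psi_fst pdir_psi_snd)

lemma frame_field_ind_conn_fst:
  assumes Y: "frame_field \<alpha> \<beta> Y"
    and d\<alpha>: "\<And>s. s \<in> I \<Longrightarrow> (\<alpha> has_real_derivative \<alpha>' s) (at s)"
    and d\<beta>: "\<And>s. s \<in> I \<Longrightarrow> (\<beta> has_real_derivative \<beta>' s) (at s)"
  shows "frame_field (\<lambda>s. \<alpha>' s + q * \<alpha> s) (\<lambda>s. \<beta>' s + p * \<beta> s / x s) (ind_conn Cz \<psi> (1, 0) Y)"
  unfolding frame_field_def
proof (intro ballI allI)
  fix s t assume s: "s \<in> I"
  have pdir_Y: "pdir Y (s, t) (1, 0) = \<alpha>' s *\<^sub>R psi_s t + (\<beta> s * p + \<beta>' s * x s) *\<^sub>R circular t"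
    using Y unfolding frame_field_def psi_t_def
    by (intro pdir_fst_eqI[OF open_I s, where w = "\<lambda>r. \<alpha> r *\<^sub>R psi_s t + (\<beta> r * x r) *\<^sub>R circular t"])
      (auto intro!: derivative_eq_intros d\<alpha> d\<beta> x_deriv s)
  have Cz_Y: "Cz (\<psi> (s, t)) \<bullet> Y (s, t) = q * \<alpha> s"
    using Y s by (simp add: frame_field_def Cz_eq_e3 inner_add_right)
  show "ind_conn Cz \<psi> (1, 0) Y (s, t) =
      (\<alpha>' s + q * \<alpha> s) *\<^sub>R psi_s t + (\<beta>' s + p * \<beta> s / x s) *\<^sub>R psi_t s t"
    unfolding ind_conn_def snm_conn_def pdir_Y Cz_Y
    using s by (simp add: pdir_psi_fst tang_psi inner_add_left
        field_simps power2_eq_square)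
qed

lemma frame_field_ind_conn_snd:
  assumes Y: "frame_field \<alpha> \<beta> Y"
  shows "frame_field (\<lambda>s. - l * p * x s * \<beta> s) (\<lambda>s. l * (p / x s + q) * \<alpha> s) (ind_conn Cz \<psi> (0, l) Y)"
  unfolding frame_field_def
proof (intro ballI allI)
  fix s t assume s: "s \<in> I"
  have pdir_Y: "pdir Y (s, t) (0, l) = l *\<^sub>R ((\<alpha> s * p) *\<^sub>R circular t - (\<beta> s * x s) *\<^sub>R radial t)"
    using Y s unfolding frame_field_def psi_s_def psi_t_def
    by (intro pdir_snd_eqI[where w = "\<lambda>r. (\<alpha> s * p) *\<^sub>R radial r + (\<alpha> s * q) *\<^sub>R e3 + (\<beta> s * x s) *\<^sub>R circular r"])
      (auto intro!: derivative_eq_intros radial_has_vector_derivative circular_has_vector_derivative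
        simp: algebra_simps)
  have Cz_Y: "Cz (\<psi> (s, t)) \<bullet> Y (s, t) = q * \<alpha> s"
    using Y s by (simp add: frame_field_def Cz_eq_e3 inner_add_right)
  show "ind_conn Cz \<psi> (0, l) Y (s, t) =
      (- l * p * x s * \<beta> s) *\<^sub>R psi_s t + (l * (p / x s + q) * \<alpha> s) *\<^sub>R psi_t s t"
    unfolding ind_conn_def snm_conn_def pdir_Y Cz_Y
    using s by (simp add: pdir_psi_snd tang_psi inner_add_left
        inner_diff_left field_simps power2_eq_square)
qed

lemma ind_curv_snd_snd:
  assumes "s \<in> I"
  shows "ind_curv Cz \<psi> (1, 0) (0, l) (0, l) (s, t) = (- l\<^sup>2 * p * q * x s) *\<^sub>R psi_s t"
proof -
  let ?Z = "\<lambda>v. pdir \<psi> v (0, l)"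
  have bZ: "frame_field (\<lambda>s. - l\<^sup>2 * p * x s) (\<lambda>_. 0) (ind_conn Cz \<psi> (0, l) ?Z)"
    using frame_field_ind_conn_snd[OF frame_field_pdir_psi(2)]
    by (rule frame_field_cong) (simp add: power2_eq_square)
  have abZ: "frame_field (\<lambda>s. - l\<^sup>2 * p * (p + q * x s)) (\<lambda>_. 0)
      (ind_conn Cz \<psi> (1, 0) (ind_conn Cz \<psi> (0, l) ?Z))"
    using frame_field_ind_conn_fst[OF bZ, where \<alpha>' = "\<lambda>_. - l\<^sup>2 * p * p" and \<beta>' = "\<lambda>_. 0"]
    by (rule frame_field_cong) (auto intro!: derivative_eq_intros x_deriv simp: algebra_simps)
  have aZ: "frame_field (\<lambda>_. 0) (\<lambda>s. l * p / x s) (ind_conn Cz \<psi> (1, 0) ?Z)"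
    using frame_field_ind_conn_fst[OF frame_field_pdir_psi(2), where \<alpha>' = "\<lambda>_. 0" and \<beta>' = "\<lambda>_. 0"]
    by (rule frame_field_cong) auto
  have baZ: "frame_field (\<lambda>_. - l\<^sup>2 * p\<^sup>2) (\<lambda>_. 0) (ind_conn Cz \<psi> (0, l) (ind_conn Cz \<psi> (1, 0) ?Z))"
    using frame_field_ind_conn_snd[OF aZ]
    by (rule frame_field_cong) (auto simp: power2_eq_square)
  have curv_terms: "ind_conn Cz \<psi> (1, 0) (ind_conn Cz \<psi> (0, l) ?Z) (s, t) = (- l\<^sup>2 * p * (p + q * x s)) *\<^sub>R psi_s t"
    "ind_conn Cz \<psi> (0, l) (ind_conn Cz \<psi> (1, 0) ?Z) (s, t) = (- l\<^sup>2 * p\<^sup>2) *\<^sub>R psi_s t"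
    using abZ baZ assms by (simp_all add: frame_field_def)
  show ?thesis
    unfolding ind_curv_def Let_def curv_terms scaleR_diff_left[symmetric]
    by (simp add: algebra_simps power2_eq_square)
qed

lemma ind_curv_fst_fst:
  assumes "s \<in> I"
  shows "ind_curv Cz \<psi> (0, l) (1, 0) (1, 0) (s, t) = (l * q\<^sup>2) *\<^sub>R psi_t s t"
proof -
  let ?Z = "\<lambda>v. pdir \<psi> v (1, 0)"
  have aZ: "frame_field (\<lambda>_. q) (\<lambda>_. 0) (ind_conn Cz \<psi> (1, 0) ?Z)"
    using frame_field_ind_conn_fst[OF frame_field_pdir_psi(1), where \<alpha>' = "\<lambda>_. 0" and \<beta>' = "\<lambda>_. 0"]
    by (rule frame_field_cong) auto
  have baZ: "frame_field (\<lambda>_. 0) (\<lambda>s. l * q * (p / x s + q))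
      (ind_conn Cz \<psi> (0, l) (ind_conn Cz \<psi> (1, 0) ?Z))"
    using frame_field_ind_conn_snd[OF aZ]
    by (rule frame_field_cong) auto
  have bZ: "frame_field (\<lambda>_. 0) (\<lambda>s. l * (p / x s + q)) (ind_conn Cz \<psi> (0, l) ?Z)"
    using frame_field_ind_conn_snd[OF frame_field_pdir_psi(1)]
    by (rule frame_field_cong) auto
  have abZ: "frame_field (\<lambda>_. 0) (\<lambda>s. l * p * q / x s)
      (ind_conn Cz \<psi> (1, 0) (ind_conn Cz \<psi> (0, l) ?Z))"
    using frame_field_ind_conn_fst[OF bZ, where \<alpha>' = "\<lambda>_. 0" and \<beta>' = "\<lambda>s. - l * p * p / (x s)\<^sup>2"]
    by (rule frame_field_cong) (auto intro!: derivative_eq_intros x_deriv simp: field_simps power2_eq_square)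
  have curv_terms: "ind_conn Cz \<psi> (0, l) (ind_conn Cz \<psi> (1, 0) ?Z) (s, t) = (l * q * (p / x s + q)) *\<^sub>R psi_t s t"
    "ind_conn Cz \<psi> (1, 0) (ind_conn Cz \<psi> (0, l) ?Z) (s, t) = (l * p * q / x s) *\<^sub>R psi_t s t"
    using abZ baZ assms by (simp_all add: frame_field_def)
  show ?thesis
    unfolding ind_curv_def Let_def curv_terms scaleR_diff_left[symmetric]
    using assms by (simp add: field_simps power2_eq_square)
qed

lemma sect_expr_coordinate_frame:
  assumes "s \<in> I"
  shows "sect_expr Cz \<psi> (s, t) (1, 0) (0, l) = l\<^sup>2 * q * x s * (q * x s - p) / 2"
  using assms
  by (simp add: sect_expr_def ind_curv_snd_snd ind_curv_fst_fst pdir_psi_fst pdir_psi_snd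
      algebra_simps power2_eq_square)

lemma const_sect_curv_eq:
  assumes K: "const_sect_curv Cz \<psi> (I \<times> UNIV) k" and s: "s \<in> I"
  shows "k = (q\<^sup>2 - p * q / x s) / 2"
proof -
  let ?l = "1 / x s"
  have "norm (pdir \<psi> (s, 0) (1, 0)) = 1" "norm (pdir \<psi> (s, 0) (0, ?l)) = 1"
    "pdir \<psi> (s, 0) (1, 0) \<bullet> pdir \<psi> (s, 0) (0, ?l) = 0"
    using s by (simp_all add: pdir_psi_fst pdir_psi_snd norm_eq_sqrt_inner power2_eq_square)
  then have "k = sect_expr Cz \<psi> (s, 0) (1, 0) (0, ?l)"
    using K s unfolding const_sect_curv_def by auto
  also have "\<dots> = (q\<^sup>2 - p * q / x s) / 2"
    using s by (simp add: sect_expr_coordinate_frame field_simps power2_eq_square)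
  finally show ?thesis .
qed

lemma const_sect_curv_cases:
  assumes K: "const_sect_curv Cz \<psi> (I \<times> UNIV) k" and "I \<noteq> {}"
  shows "(p = 0 \<and> k = 1/2) \<or> (q = 0 \<and> k = 0)"
proof -
  obtain s0 where s0: "s0 \<in> I"
    using assms(2) by blast
  have "p = 0" if "q \<noteq> 0"
  proof (rule ccontr)
    assume "p \<noteq> 0"
    then have "x s = p * q / (q\<^sup>2 - 2 * k)" if "s \<in> I" for s
    proof -
      have radius: "x s * (q\<^sup>2 - 2 * k) = p * q"
        using const_sect_curv_eq[OF K that] that by (simp add: field_simps)
      then have "q\<^sup>2 - 2 * k \<noteq> 0"
        using \<open>p \<noteq> 0\<close> \<open>q \<noteq> 0\<close> by auto
      with radius show ?thesis
        by (simp add: field_simps)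
    qed
    then have "((\<lambda>_. p * q / (q\<^sup>2 - 2 * k)) has_real_derivative p) (at s0)"
      by (intro has_field_derivative_transform_within_open[OF x_deriv[OF s0] open_I s0]) auto
    then have "p = 0"
      using DERIV_const DERIV_unique by blast
    with \<open>p \<noteq> 0\<close> show False ..
  qed
  then show ?thesis
    using const_sect_curv_eq[OF K s0] unit_speed by (cases "q = 0") auto
qed

end

theorem theorem4p3:
  fixes I :: "real set" and x z x' z' :: "real \<Rightarrow> real" and k :: real
  assumes "open I" and "is_interval I" and "I \<noteq> {}"
    and "smooth_real_on I x" and "smooth_real_on I z"
    and "\<forall>s\<in>I. (x has_real_derivative x' s) (at s)"
    and "\<forall>s\<in>I. (z has_real_derivative z' s) (at s)"
    and "\<forall>s\<in>I. x s > 0"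
    and "\<forall>s\<in>I. (x' s)\<^sup>2 + (z' s)\<^sup>2 = 1"
    and "\<exists>A B c. (A, B) \<noteq> (0, 0) \<and> (\<forall>s\<in>I. A * x s + B * z s = c)"
    and "const_sect_curv Cz (rot_surf x z) (I \<times> UNIV) k"
  shows "((\<exists>r. \<forall>s\<in>I. x s = r) \<and> k = 1/2) \<or> ((\<exists>h. \<forall>s\<in>I. z s = h) \<and> k = 0)"
proof -
  obtain p q where pq: "\<forall>s\<in>I. x' s = p \<and> z' s = q"
    using assms(10) unit_speed_line_constant_velocity[OF assms(1,2)
        smooth_real_on_derivative_continuous[OF assms(4,6)]
        smooth_real_on_derivative_continuous[OF assms(5,7)]] assms(6,7,9) by metis
  then interpret straight_rotational_surface I x z p q
    using assms(1,3,6-9) by unfold_locales force+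
  have "\<exists>c. \<forall>s\<in>I. x s = c" if "p = 0"
    using zero_derivative_imp_constant_on_interval[OF assms(2)] x_deriv that by blast
  moreover have "\<exists>c. \<forall>s\<in>I. z s = c" if "q = 0"
    using zero_derivative_imp_constant_on_interval[OF assms(2)] z_deriv that by blast
  ultimately show ?thesis
    using const_sect_curv_cases[OF assms(11,3)] by blast
qed

end
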